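(* Let $\mathcal{A}$ be a nice GFG-tNCW that is minimal, i.e., $|\mathcal{A}|\le|\mathcal{B}|$ for every GFG-tNCW $\mathcal{B}$ with $L(\mathcal{B})=L(\mathcal{A})$. Then $\mathcal{A}$ is safe-centralized and safe-minimal.
   Context: A tNCW (transition-based nondeterministic co-Büchi word automaton) is $\mathcal{A}=\langle\Sigma,Q,q_0,\delta,\alpha\rangle$, where $\Sigma$ is a finite alphabet, $Q$ a finite set of states, $q_0\in Q$ the initial state, $\delta:Q\times\Sigma\to 2^Q\setminus\{\emptyset\}$ the transition function, with induced transition relation $\Delta=\{\langle q,\sigma,s\rangle: s\in\delta(q,\sigma)\}$, and $\alpha\subseteq\Delta$. The size $|\mathcal{A}|$ is $|Q|$. Transitions in $\alpha$ are $\alpha$-transitions, those in $\Delta\setminus\alpha$ are $\bar\alpha$-transitions; $\delta^{\alpha}(q,\sigma)=\{s:\langle q,\sigma,s\rangle\in\alpha\}$ and $\delta^{\bar\alpha}(q,\sigma)=\{s:\langle q,\sigma,s\rangle\in\Delta\setminus\alpha\}$. A run on $w=\sigma_1\sigma_2\cdots$ is $r_0r_1\cdots$ with $r_0=q_0$ and $r_{i+1}\in\delta(r_i,\sigma_{i+1})$; it is accepting iff it traverses $\alpha$-transitions only finitely often; $L(\mathcal{A})$ is the set of words with an accepting run. $\mathcal{A}^q$ is $\mathcal{A}$ with initial state $q$. States $q,s$ are equivalent, $q\sim s$, if $L(\mathcal{A}^q)=L(\mathcal{A}^s)$. $\mathcal{A}$ is GFG if there is $f:\Sigma^*\to Q$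 with $f(\epsilon)=q_0$, $\langle f(u),\sigma,f(u\sigma)\rangle\in\Delta$ for all $u\in\Sigma^*,\sigma\in\Sigma$, and such that for every $w\in L(\mathcal{A})$ the run $f(w[1,0]),f(w[1,1]),f(w[1,2]),\dots$ is accepting (where $w[1,i]$ is the length-$i$ prefix). A state $q$ is GFG if $\mathcal{A}^q$ is GFG. $\mathcal{A}$ is semantically deterministic if for all $q,\sigma$, all states in $\delta(q,\sigma)$ are pairwise equivalent; safe deterministic if $|\delta^{\bar\alpha}(q,\sigma)|\le 1$ for all $q,\sigma$. The safe components of $\mathcal{A}$ are the strongly connected components of the graph on $Q$ with an edge $q\to q'$ iff $q'\in\delta^{\bar\alpha}(q,\sigma)$ for some $\sigma$. $\mathcal{A}$ is normal if whenever there is a path of $\bar\alpha$-transitions from $q$ to $s$, there is also one from $s$ to $q$. $\mathcal{A}$ is nice if all its states are reachable from $q_0$ and GFG, and $\mathcal{A}$ is normal, safe deterministic and semantically deterministic. A run is safe if it traverses no $\alpha$-transition; $L_{safe}(\mathcal{A}^q)$ is the set of infinite words having a safe run from $q$. Write $q\approx s$ if $q\sim s$ and $L_{safe}(\mathcal{A}^q)=L_{safe}(\mathcal{A}^s)$, and $q\precsim s$ if $q\sim s$ and $L_{safe}(\mathcal{A}^q)\subseteq L_{safe}(\mathcal{A}^s)$. $\mathcal{A}$ is safe-minimal if it has no two distinct states $q\approx s$; safe-centralized if $q\precsim s$ implies that $q$ and $s$ lie in the same safe component. *)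

theory Defs
  imports Main
begin

text \<open>A tNCW over alphabet alph, with state set states, initial state init,
  transition function trans and set of alpha-transitions acc.\<close>
record ('q, 'a) tncw =
  alph   :: "'a set"
  states :: "'q set"
  init   :: 'q
  trans  :: "'q \<Rightarrow> 'a \<Rightarrow> 'q set"
  acc    :: "('q \<times> 'a \<times> 'q) set"

definition Delta :: "('q, 'a) tncw \<Rightarrow> ('q \<times> 'a \<times> 'q) set" where
  "Delta A = {(q, \<sigma>, s). q \<in> states A \<and> \<sigma> \<in> alph A \<and> s \<in> trans A q \<sigma>}"

definition wf_tncw :: "('q, 'a) tncw \<Rightarrow> bool" where
  "wf_tncw A \<longleftrightarrow> finite (alph A) \<and> finite (states A) \<and> init A \<in> states A
     \<and> (\<forall>q\<in>states A. \<forall>\<sigma>\<in>alph A. trans A q \<sigma> \<subseteq> states A \<and> trans A q \<sigma> \<noteq> {})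
     \<and> acc A \<subseteq> Delta A"

definition trans_acc :: "('q, 'a) tncw \<Rightarrow> 'q \<Rightarrow> 'a \<Rightarrow> 'q set" where
  "trans_acc A q \<sigma> = {s. (q, \<sigma>, s) \<in> acc A}"

definition trans_nacc :: "('q, 'a) tncw \<Rightarrow> 'q \<Rightarrow> 'a \<Rightarrow> 'q set" where
  "trans_nacc A q \<sigma> = {s. (q, \<sigma>, s) \<in> Delta A - acc A}"

definition iwords :: "'a set \<Rightarrow> (nat \<Rightarrow> 'a) set" where
  "iwords S = {w. \<forall>i. w i \<in> S}"

definition is_run_from :: "('q, 'a) tncw \<Rightarrow> 'q \<Rightarrow> (nat \<Rightarrow> 'a) \<Rightarrow> (nat \<Rightarrow> 'q) \<Rightarrow> bool" where
  "is_run_from A q w r \<longleftrightarrow> r 0 = q \<and> (\<forall>i. r (Suc i) \<in> trans A (r i) (w i))"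

definition accepting_run :: "('q, 'a) tncw \<Rightarrow> (nat \<Rightarrow> 'a) \<Rightarrow> (nat \<Rightarrow> 'q) \<Rightarrow> bool" where
  "accepting_run A w r \<longleftrightarrow> finite {i. (r i, w i, r (Suc i)) \<in> acc A}"

definition safe_run :: "('q, 'a) tncw \<Rightarrow> (nat \<Rightarrow> 'a) \<Rightarrow> (nat \<Rightarrow> 'q) \<Rightarrow> bool" where
  "safe_run A w r \<longleftrightarrow> (\<forall>i. (r i, w i, r (Suc i)) \<notin> acc A)"

definition lang :: "('q, 'a) tncw \<Rightarrow> (nat \<Rightarrow> 'a) set" where
  "lang A = {w \<in> iwords (alph A). \<exists>r. is_run_from A (init A) w r \<and> accepting_run A w r}"

definition lang_from :: "('q, 'a) tncw \<Rightarrow> 'q \<Rightarrow> (nat \<Rightarrow> 'a) set" where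
  "lang_from A q = lang (A\<lparr>init := q\<rparr>)"

definition safe_lang_from :: "('q, 'a) tncw \<Rightarrow> 'q \<Rightarrow> (nat \<Rightarrow> 'a) set" where
  "safe_lang_from A q = {w \<in> iwords (alph A). \<exists>r. is_run_from A q w r \<and> safe_run A w r}"

definition prefix :: "(nat \<Rightarrow> 'a) \<Rightarrow> nat \<Rightarrow> 'a list" where
  "prefix w i = map w [0..<i]"

definition is_gfg :: "('q, 'a) tncw \<Rightarrow> bool" where
  "is_gfg A \<longleftrightarrow> (\<exists>f :: 'a list \<Rightarrow> 'q.
      f [] = init A
    \<and> (\<forall>u \<in> lists (alph A). \<forall>\<sigma> \<in> alph A. (f u, \<sigma>, f (u @ [\<sigma>])) \<in> Delta A)
    \<and> (\<forall>w \<in> lang A. accepting_run A w (\<lambda>i. f (prefix w i))))"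

definition gfg_state :: "('q, 'a) tncw \<Rightarrow> 'q \<Rightarrow> bool" where
  "gfg_state A q \<longleftrightarrow> is_gfg (A\<lparr>init := q\<rparr>)"

definition equiv_states :: "('q, 'a) tncw \<Rightarrow> 'q \<Rightarrow> 'q \<Rightarrow> bool" where
  "equiv_states A q s \<longleftrightarrow> lang_from A q = lang_from A s"

definition sem_det :: "('q, 'a) tncw \<Rightarrow> bool" where
  "sem_det A \<longleftrightarrow> (\<forall>q\<in>states A. \<forall>\<sigma>\<in>alph A. \<forall>s1\<in>trans A q \<sigma>. \<forall>s2\<in>trans A q \<sigma>.
      equiv_states A s1 s2)"

definition safe_det :: "('q, 'a) tncw \<Rightarrow> bool" where
  "safe_det A \<longleftrightarrow> (\<forall>q\<in>states A. \<forall>\<sigma>\<in>alph A. card (trans_nacc A q \<sigma>) \<le> 1)"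

definition safe_edges :: "('q, 'a) tncw \<Rightarrow> ('q \<times> 'q) set" where
  "safe_edges A = {(q, q'). \<exists>\<sigma>. (q, \<sigma>, q') \<in> Delta A - acc A}"

definition all_edges :: "('q, 'a) tncw \<Rightarrow> ('q \<times> 'q) set" where
  "all_edges A = {(q, q'). \<exists>\<sigma>. (q, \<sigma>, q') \<in> Delta A}"

definition same_safe_comp :: "('q, 'a) tncw \<Rightarrow> 'q \<Rightarrow> 'q \<Rightarrow> bool" where
  "same_safe_comp A q s \<longleftrightarrow> (q, s) \<in> (safe_edges A)\<^sup>* \<and> (s, q) \<in> (safe_edges A)\<^sup>*"

definition normal :: "('q, 'a) tncw \<Rightarrow> bool" where
  "normal A \<longleftrightarrow> (\<forall>q\<in>states A. \<forall>s\<in>states A.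
      (q, s) \<in> (safe_edges A)\<^sup>* \<longrightarrow> (s, q) \<in> (safe_edges A)\<^sup>*)"

definition nice :: "('q, 'a) tncw \<Rightarrow> bool" where
  "nice A \<longleftrightarrow> (\<forall>q\<in>states A. (init A, q) \<in> (all_edges A)\<^sup>*)
     \<and> (\<forall>q\<in>states A. gfg_state A q)
     \<and> normal A \<and> safe_det A \<and> sem_det A"

definition safe_equiv :: "('q, 'a) tncw \<Rightarrow> 'q \<Rightarrow> 'q \<Rightarrow> bool" where
  "safe_equiv A q s \<longleftrightarrow> equiv_states A q s \<and> safe_lang_from A q = safe_lang_from A s"

definition safe_le :: "('q, 'a) tncw \<Rightarrow> 'q \<Rightarrow> 'q \<Rightarrow> bool" where
  "safe_le A q s \<longleftrightarrow> equiv_states A q s \<and> safe_lang_from A q \<subseteq> safe_lang_from A s"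

definition safe_minimal :: "('q, 'a) tncw \<Rightarrow> bool" where
  "safe_minimal A \<longleftrightarrow> (\<forall>q\<in>states A. \<forall>s\<in>states A. safe_equiv A q s \<longrightarrow> q = s)"

definition safe_centralized :: "('q, 'a) tncw \<Rightarrow> bool" where
  "safe_centralized A \<longleftrightarrow> (\<forall>q\<in>states A. \<forall>s\<in>states A. safe_le A q s \<longrightarrow> same_safe_comp A q s)"

text \<open>Minimality among all GFG-tNCWs over the same alphabet recognizing the same language.
  Competitors have states drawn from nat; every finite state set can be renamed into nat.\<close>
definition minimal_gfg :: "('q, 'a) tncw \<Rightarrow> bool" where
  "minimal_gfg A \<longleftrightarrow> (\<forall>B :: (nat, 'a) tncw. wf_tncw B \<and> alph B = alph A \<and> is_gfg B
      \<and> lang B = lang A \<longrightarrow> card (states A) \<le> card (states B))"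

end

theory Submission
  imports Defs
begin

(* Let R be a proper subset of the states Q of A and h : Q -> R a map such that every x is
   equivalent to h x with L_safe(x) contained in L_safe(h x), and t is safely equivalent to
   h t whenever t is the target of a safe transition from R.  Keep the states R, let p move on
   sigma to every state of R equivalent to a sigma-successor of p, and keep as safe exactly the
   transitions p -sigma-> h t for safe transitions p -sigma-> t of A.  Safe runs of this
   automaton B are shadowed, state by state up to safe equivalence, by safe runs of A, so L(B)
   is contained in L(A).  B is GFG with language L(A): follow the unique safe transition of B
   when there is one, and otherwise jump to h of the state chosen by a strategy of A.  Once the
   run of A's strategy has become safe, a jump lands in a state whose safe language contains
   the rest of the word, so there are only finitely many jumps.  Minimality of A therefore
   rules out such R and h.

   If q and s are distinct safely equivalent states, take R = Q - {q} and send q to s.  If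
   L_safe(q) is contained in L_safe(s) while q and s lie in different safe components, take
   R = Q minus the safe component C of q: pushing s along the safe paths leaving q (safe
   determinism, and nonempty safe languages in a normal automaton) maps each state of C to a
   state outside C whose safe language contains its own, and by normality no safe transition
   leaves R. *)

section \<open>Runs and residual languages\<close>

definition suffix :: "(nat \<Rightarrow> 'a) \<Rightarrow> nat \<Rightarrow> nat \<Rightarrow> 'a" where
  "suffix w k = (\<lambda>i. w (k + i))"

lemma suffix_apply: "suffix w k i = w (k + i)"
  by (simp add: suffix_def)

lemma suffix_0 [simp]: "suffix w 0 = w"
  by (simp add: suffix_def)

lemma suffix_suffix [simp]: "suffix (suffix w j) k = suffix w (j + k)"
  by (simp add: suffix_def add.assoc)

lemma suffix_case_nat [simp]: "suffix (case_nat \<sigma> v) (Suc 0) = v"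
  by (simp add: suffix_def)

lemma iwords_suffix: "w \<in> iwords S \<Longrightarrow> suffix w k \<in> iwords S"
  by (simp add: iwords_def suffix_apply)

lemma iwords_unfold: "w \<in> iwords S \<longleftrightarrow> w 0 \<in> S \<and> suffix w (Suc 0) \<in> iwords S"
  by (auto simp: iwords_def suffix_apply) (metis Suc_eq_plus1_left not0_implies_Suc)

lemma prefix_0 [simp]: "prefix w 0 = []"
  by (simp add: prefix_def)

lemma prefix_Suc: "prefix w (Suc i) = prefix w i @ [w i]"
  by (simp add: prefix_def)

lemma prefix_lists: "w \<in> iwords S \<Longrightarrow> prefix w i \<in> lists S"
  by (auto simp: prefix_def iwords_def)

lemma accepting_run_iff_eventually_safe:
  "accepting_run A w r \<longleftrightarrow> (\<exists>n. \<forall>i\<ge>n. (r i, w i, r (Suc i)) \<notin> acc A)"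
  unfolding accepting_run_def finite_nat_set_iff_bounded by (meson mem_Collect_eq not_le)

lemma is_run_from_suffix:
  "is_run_from A p w r \<Longrightarrow> is_run_from A (r k) (suffix w k) (\<lambda>i. r (k + i))"
  by (simp add: is_run_from_def suffix_apply)

lemma trans_subset_states:
  "wf_tncw A \<Longrightarrow> q \<in> states A \<Longrightarrow> \<sigma> \<in> alph A \<Longrightarrow> trans A q \<sigma> \<subseteq> states A"
  by (simp add: wf_tncw_def)

lemma run_in_states:
  assumes "wf_tncw A" "q \<in> states A" "w \<in> iwords (alph A)" "is_run_from A q w r"
  shows "r i \<in> states A"
proof (induction i)
  case 0
  then show ?case using assms(2,4) by (simp add: is_run_from_def)
next
  case (Suc i)
  have "w i \<in> alph A" using assms(3) by (simp add: iwords_def)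
  then show ?case using Suc assms(1,4) unfolding wf_tncw_def is_run_from_def by blast
qed

lemma strategy_run:
  assumes "\<And>u \<sigma>. u \<in> lists (alph A) \<Longrightarrow> \<sigma> \<in> alph A \<Longrightarrow> (f u, \<sigma>, f (u @ [\<sigma>])) \<in> Delta A"
    and "w \<in> iwords (alph A)"
  shows "is_run_from A (f []) w (\<lambda>i. f (prefix w i))"
  using assms prefix_lists[OF assms(2)]
  by (auto simp: is_run_from_def prefix_Suc Delta_def iwords_def)

lemma strategy_in_states:
  assumes "wf_tncw A" "f [] \<in> states A"
    and "\<And>u \<sigma>. u \<in> lists (alph A) \<Longrightarrow> \<sigma> \<in> alph A \<Longrightarrow> (f u, \<sigma>, f (u @ [\<sigma>])) \<in> Delta A"
    and "u \<in> lists (alph A)"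
  shows "f u \<in> states A"
  using assms(4)
proof (induction u rule: rev_induct)
  case (snoc \<sigma> u)
  then have "f (u @ [\<sigma>]) \<in> trans A (f u) \<sigma>" "f u \<in> states A" "\<sigma> \<in> alph A"
    using assms(3) by (auto simp: Delta_def)
  then show ?case using assms(1) by (auto simp: wf_tncw_def)
qed (use assms(2) in simp)

lemma lang_from_iff:
  "w \<in> lang_from A q \<longleftrightarrow> w \<in> iwords (alph A) \<and> (\<exists>r. is_run_from A q w r \<and> accepting_run A w r)"
  by (simp add: lang_from_def lang_def is_run_from_def accepting_run_def)

lemma lang_eq_lang_from_init: "lang A = lang_from A (init A)"
  by (simp add: lang_from_def)

lemma lang_from_suffix:
  assumes "is_run_from A p w r" "accepting_run A w r" "w \<in> iwords (alph A)"
  shows "suffix w k \<in> lang_from A (r k)"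
proof -
  obtain n where "\<forall>i\<ge>n. (r i, w i, r (Suc i)) \<notin> acc A"
    using assms(2) by (auto simp: accepting_run_iff_eventually_safe)
  then have "accepting_run A (suffix w k) (\<lambda>i. r (k + i))"
    unfolding accepting_run_iff_eventually_safe by (intro exI[of _ n]) (simp add: suffix_apply)
  then show ?thesis
    using is_run_from_suffix[OF assms(1)] iwords_suffix[OF assms(3)] by (auto simp: lang_from_iff)
qed

lemma safe_lang_from_suffix:
  assumes "is_run_from A p w r" "\<forall>i\<ge>n. (r i, w i, r (Suc i)) \<notin> acc A" "w \<in> iwords (alph A)"
  shows "suffix w n \<in> safe_lang_from A (r n)"
  using is_run_from_suffix[OF assms(1), of n] iwords_suffix[OF assms(3), of n] assms(2)
  by (auto simp: safe_lang_from_def safe_run_def suffix_apply)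

lemma lang_from_unfold:
  "w \<in> lang_from A p \<longleftrightarrow> w 0 \<in> alph A \<and> (\<exists>t\<in>trans A p (w 0). suffix w (Suc 0) \<in> lang_from A t)"
proof
  assume "w \<in> lang_from A p"
  then obtain r where r: "is_run_from A p w r" "accepting_run A w r" and w: "w \<in> iwords (alph A)"
    by (auto simp: lang_from_iff)
  have "r (Suc 0) \<in> trans A p (w 0)" using r(1) unfolding is_run_from_def by metis
  then show "w 0 \<in> alph A \<and> (\<exists>t\<in>trans A p (w 0). suffix w (Suc 0) \<in> lang_from A t)"
    using lang_from_suffix[OF r w] w by (auto simp: iwords_def)
next
  assume "w 0 \<in> alph A \<and> (\<exists>t\<in>trans A p (w 0). suffix w (Suc 0) \<in> lang_from A t)"
  then obtain t r where t: "w 0 \<in> alph A" "t \<in> trans A p (w 0)" and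
    r: "is_run_from A t (suffix w (Suc 0)) r" "accepting_run A (suffix w (Suc 0)) r"
       "suffix w (Suc 0) \<in> iwords (alph A)"
    by (auto simp: lang_from_iff)
  obtain n where n: "\<forall>i\<ge>n. (r i, w (Suc i), r (Suc i)) \<notin> acc A"
    using r(2) by (auto simp: accepting_run_iff_eventually_safe suffix_apply)
  have run: "is_run_from A p w (case_nat p r)"
    using t r(1) by (auto simp: is_run_from_def suffix_apply split: nat.split)
  have "\<forall>i\<ge>Suc n. (case_nat p r i, w i, case_nat p r (Suc i)) \<notin> acc A"
  proof (intro allI impI)
    fix i assume "Suc n \<le> i"
    then obtain j where "i = Suc j" "n \<le> j" by (cases i) auto
    then show "(case_nat p r i, w i, case_nat p r (Suc i)) \<notin> acc A" using n by (simp add: suffix_apply)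
  qed
  then have "accepting_run A w (case_nat p r)"
    unfolding accepting_run_iff_eventually_safe by blast
  then show "w \<in> lang_from A p"
    using run t r(3) by (auto simp: lang_from_iff iwords_unfold[of w])
qed

lemma safe_lang_from_unfold:
  "w \<in> safe_lang_from A p \<longleftrightarrow>
     w 0 \<in> alph A \<and> (\<exists>t\<in>trans A p (w 0). (p, w 0, t) \<notin> acc A \<and> suffix w (Suc 0) \<in> safe_lang_from A t)"
proof
  assume "w \<in> safe_lang_from A p"
  then obtain r where r: "is_run_from A p w r" "safe_run A w r" and w: "w \<in> iwords (alph A)"
    by (auto simp: safe_lang_from_def)
  have "r (Suc 0) \<in> trans A p (w 0)" "(p, w 0, r (Suc 0)) \<notin> acc A"
    using r by (auto simp: is_run_from_def safe_run_def dest: spec[of _ 0])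
  then show "w 0 \<in> alph A \<and>
      (\<exists>t\<in>trans A p (w 0). (p, w 0, t) \<notin> acc A \<and> suffix w (Suc 0) \<in> safe_lang_from A t)"
    using safe_lang_from_suffix[OF r(1) _ w, of "Suc 0"] r(2) w by (auto simp: safe_run_def iwords_def suffix_apply)
next
  assume "w 0 \<in> alph A \<and>
      (\<exists>t\<in>trans A p (w 0). (p, w 0, t) \<notin> acc A \<and> suffix w (Suc 0) \<in> safe_lang_from A t)"
  then obtain t r where t: "w 0 \<in> alph A" "t \<in> trans A p (w 0)" "(p, w 0, t) \<notin> acc A" and
    r: "is_run_from A t (suffix w (Suc 0)) r" "safe_run A (suffix w (Suc 0)) r"
       "suffix w (Suc 0) \<in> iwords (alph A)"
    by (auto simp: safe_lang_from_def)
  have "is_run_from A p w (case_nat p r)" "safe_run A w (case_nat p r)"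
    using t r(1,2) by (auto simp: is_run_from_def safe_run_def suffix_apply split: nat.split)
  then show "w \<in> safe_lang_from A p"
    using t r(3) by (auto simp: safe_lang_from_def iwords_unfold[of w])
qed

lemma lang_from_suffix_iff:
  "suffix w i \<in> lang_from A p \<longleftrightarrow>
     w i \<in> alph A \<and> (\<exists>t\<in>trans A p (w i). suffix w (Suc i) \<in> lang_from A t)"
  unfolding lang_from_unfold[of "suffix w i"] by (simp add: suffix_apply)

lemma safe_lang_from_suffix_iff:
  "suffix w i \<in> safe_lang_from A p \<longleftrightarrow>
     w i \<in> alph A \<and> (\<exists>t\<in>trans A p (w i). (p, w i, t) \<notin> acc A \<and> suffix w (Suc i) \<in> safe_lang_from A t)"
  unfolding safe_lang_from_unfold[of "suffix w i"] by (simp add: suffix_apply)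

lemma safe_lang_from_subset_lang_from: "safe_lang_from A p \<subseteq> lang_from A p"
  by (force simp: safe_lang_from_def lang_from_iff accepting_run_iff_eventually_safe safe_run_def)

lemma safe_lang_from_coinduct:
  assumes "P p 0"
    and step: "\<And>q i. P q i \<Longrightarrow> \<exists>q'. (q, w i, q') \<in> Delta A - acc A \<and> P q' (Suc i)"
  shows "w \<in> safe_lang_from A p"
proof -
  define r where "r = rec_nat p (\<lambda>i q. SOME q'. (q, w i, q') \<in> Delta A - acc A \<and> P q' (Suc i))"
  have r_0: "r 0 = p"
    and r_Suc: "r (Suc i) = (SOME q'. (r i, w i, q') \<in> Delta A - acc A \<and> P q' (Suc i))" for i
    by (simp_all add: r_def)
  have "P (r i) i" for i
  proof (induction i)
    case 0
    then show ?case using assms(1) r_0 by simp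
  next
    case (Suc i)
    then show ?case unfolding r_Suc using someI_ex[OF step] by blast
  qed
  then have "(r i, w i, r (Suc i)) \<in> Delta A - acc A" for i
    unfolding r_Suc using someI_ex[OF step] by blast
  then show ?thesis using r_0
    by (auto simp: safe_lang_from_def iwords_def is_run_from_def safe_run_def Delta_def)
qed

lemma safe_lang_from_nonempty_if_safe_cycle:
  assumes "(q, q) \<in> (safe_edges A)\<^sup>+"
  shows "safe_lang_from A q \<noteq> {}"
proof -
  let ?S = "safe_edges A"
  have "\<exists>\<sigma> z. (y, \<sigma>, z) \<in> Delta A - acc A \<and> (z, q) \<in> ?S\<^sup>+" if y_q: "(y, q) \<in> ?S\<^sup>+" for y
  proof -
    obtain z where "(y, z) \<in> ?S" "(z, q) \<in> ?S\<^sup>*" using tranclD[OF y_q] by blast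
    then show ?thesis using assms by (auto simp: safe_edges_def intro: rtrancl_trancl_trancl)
  qed
  then obtain letter next_state where next_safe:
    "\<And>y. (y, q) \<in> ?S\<^sup>+ \<Longrightarrow> (y, letter y, next_state y) \<in> Delta A - acc A \<and> (next_state y, q) \<in> ?S\<^sup>+"
    by metis
  define r where "r i = (next_state ^^ i) q" for i
  have on_cycle: "(r i, q) \<in> ?S\<^sup>+" for i
    by (induction i) (use assms next_safe in \<open>auto simp: r_def\<close>)
  have "(\<lambda>i. letter (r i)) \<in> safe_lang_from A q"
    by (rule safe_lang_from_coinduct[where P = "\<lambda>y i. y = r i"])
      (use next_safe on_cycle in \<open>auto simp: r_def\<close>)
  then show ?thesis by blast
qed

lemma safe_det_unique:
  assumes "wf_tncw A" "safe_det A" "(q, \<sigma>, a) \<in> Delta A - acc A" "(q, \<sigma>, b) \<in> Delta A - acc A"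
  shows "a = b"
proof -
  have q: "q \<in> states A" "\<sigma> \<in> alph A" using assms(3) by (auto simp: Delta_def)
  have "trans_nacc A q \<sigma> \<subseteq> states A"
    using assms(1) q by (auto simp: trans_nacc_def wf_tncw_def Delta_def)
  then have "finite (trans_nacc A q \<sigma>)"
    using assms(1) by (auto simp: wf_tncw_def intro: finite_subset)
  moreover have "card (trans_nacc A q \<sigma>) \<le> 1" using assms(2) q by (simp add: safe_det_def)
  ultimately show ?thesis using assms(3,4) by (auto simp: trans_nacc_def card_le_Suc0_iff_eq)
qed

lemma lang_from_successor_mono:
  assumes "sem_det A" "p' \<in> states A" "\<sigma> \<in> alph A" "lang_from A p \<subseteq> lang_from A p'"
    and "t \<in> trans A p \<sigma>" "t' \<in> trans A p' \<sigma>"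
  shows "lang_from A t \<subseteq> lang_from A t'"
proof
  fix v assume "v \<in> lang_from A t"
  then have "case_nat \<sigma> v \<in> lang_from A p" using assms(3,5) by (subst lang_from_unfold) auto
  then have "case_nat \<sigma> v \<in> lang_from A p'" using assms(4) by blast
  then obtain t'' where "t'' \<in> trans A p' \<sigma>" "v \<in> lang_from A t''"
    by (subst (asm) lang_from_unfold) auto
  moreover have "equiv_states A t'' t'"
    using assms(1-3,6) \<open>t'' \<in> trans A p' \<sigma>\<close> by (simp add: sem_det_def)
  ultimately show "v \<in> lang_from A t'" by (simp add: equiv_states_def)
qed

lemma equiv_states_successors:
  assumes "sem_det A" "p \<in> states A" "p' \<in> states A" "\<sigma> \<in> alph A" "equiv_states A p p'"
    and "t \<in> trans A p \<sigma>" "t' \<in> trans A p' \<sigma>"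
  shows "equiv_states A t t'"
  using lang_from_successor_mono[OF assms(1,3,4) _ assms(6,7)]
    lang_from_successor_mono[OF assms(1,2,4) _ assms(7,6)] assms(5)
  unfolding equiv_states_def by blast

lemma safe_le_refl: "safe_le A x x"
  by (simp add: safe_le_def equiv_states_def)

lemma safe_equiv_iff_safe_le: "safe_equiv A q s \<longleftrightarrow> safe_le A q s \<and> safe_le A s q"
  by (auto simp: safe_equiv_def safe_le_def equiv_states_def)

lemma same_safe_comp_sym: "same_safe_comp A q s \<Longrightarrow> same_safe_comp A s q"
  by (simp add: same_safe_comp_def)

lemma same_safe_comp_trans:
  "same_safe_comp A q s \<Longrightarrow> same_safe_comp A s t \<Longrightarrow> same_safe_comp A q t"
  unfolding same_safe_comp_def by (meson rtrancl_trans)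

section \<open>Renaming states\<close>

definition rename_states :: "('q \<Rightarrow> 'r) \<Rightarrow> ('q, 'a) tncw \<Rightarrow> ('r, 'a) tncw" where
  "rename_states \<phi> B = \<lparr>alph = alph B, states = \<phi> ` states B, init = \<phi> (init B),
     trans = (\<lambda>m \<sigma>. \<phi> ` trans B (inv_into (states B) \<phi> m) \<sigma>),
     acc = (\<lambda>(p, \<sigma>, p'). (\<phi> p, \<sigma>, \<phi> p')) ` acc B\<rparr>"

locale renaming =
  fixes B :: "('q, 'a) tncw" and \<phi> :: "'q \<Rightarrow> 'r"
  assumes wf: "wf_tncw B" and inj: "inj_on \<phi> (states B)"
begin

abbreviation B' :: "('r, 'a) tncw" where
  "B' \<equiv> rename_states \<phi> B"

lemma rename_simps [simp]: "alph B' = alph B" "states B' = \<phi> ` states B" "init B' = \<phi> (init B)"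
  by (simp_all add: rename_states_def)

lemma trans_rename: "q \<in> states B \<Longrightarrow> trans B' (\<phi> q) \<sigma> = \<phi> ` trans B q \<sigma>"
  using inj by (simp add: rename_states_def)

lemma acc_rename_iff:
  assumes "x \<in> states B" "y \<in> states B"
  shows "(\<phi> x, \<sigma>, \<phi> y) \<in> acc B' \<longleftrightarrow> (x, \<sigma>, y) \<in> acc B"
proof
  assume "(\<phi> x, \<sigma>, \<phi> y) \<in> acc B'"
  then obtain p p' where pp: "(p, \<sigma>, p') \<in> acc B" "\<phi> p = \<phi> x" "\<phi> p' = \<phi> y"
    by (auto simp: rename_states_def)
  then have "(p, \<sigma>, p') \<in> Delta B" using wf by (auto simp: wf_tncw_def)
  then have "p \<in> states B" "p' \<in> states B" using trans_subset_states[OF wf] by (auto simp: Delta_def)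
  then have "p = x" "p' = y" using pp(2,3) assms inj by (auto dest: inj_onD)
  then show "(x, \<sigma>, y) \<in> acc B" using pp(1) by simp
next
  assume "(x, \<sigma>, y) \<in> acc B"
  then show "(\<phi> x, \<sigma>, \<phi> y) \<in> acc B'" by (force simp: rename_states_def)
qed

lemma wf_rename: "wf_tncw B'"
proof -
  have "acc B' \<subseteq> Delta B'"
  proof
    fix e assume "e \<in> acc B'"
    then obtain p \<sigma> p' where e: "e = (\<phi> p, \<sigma>, \<phi> p')" "(p, \<sigma>, p') \<in> acc B"
      by (auto simp: rename_states_def)
    then have "p \<in> states B" "\<sigma> \<in> alph B" "p' \<in> trans B p \<sigma>"
      using wf by (auto simp: wf_tncw_def Delta_def)
    then show "e \<in> Delta B'" using e(1) by (simp add: Delta_def trans_rename)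
  qed
  moreover have "trans B' q \<sigma> \<subseteq> states B' \<and> trans B' q \<sigma> \<noteq> {}"
    if q: "q \<in> states B'" and \<sigma>: "\<sigma> \<in> alph B'" for q \<sigma>
  proof -
    obtain x where x: "x \<in> states B" "q = \<phi> x" using q by auto
    have "trans B x \<sigma> \<subseteq> states B" "trans B x \<sigma> \<noteq> {}"
      using x(1) \<sigma> wf by (auto simp: wf_tncw_def)
    then show ?thesis using x trans_rename[OF x(1)] by auto
  qed
  ultimately show ?thesis using wf by (simp add: wf_tncw_def)
qed

lemma run_rename:
  assumes "q \<in> states B" "w \<in> iwords (alph B)" "is_run_from B q w r"
  shows "is_run_from B' (\<phi> q) w (\<phi> \<circ> r)"
  using assms run_in_states[OF wf assms] by (auto simp: is_run_from_def trans_rename)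

lemma run_unrename:
  assumes "q \<in> states B" "w \<in> iwords (alph B)" "is_run_from B' (\<phi> q) w r'"
  obtains r where "is_run_from B q w r" "r' = \<phi> \<circ> r"
proof -
  let ?\<psi> = "inv_into (states B) \<phi>"
  have r'_states: "r' i \<in> \<phi> ` states B" for i
    using run_in_states[OF wf_rename _ _ assms(3)] assms(1,2) by simp
  then have r': "r' i = \<phi> (?\<psi> (r' i))" "?\<psi> (r' i) \<in> states B" for i
    by (auto simp: f_inv_into_f inv_into_into)
  have "is_run_from B q w (?\<psi> \<circ> r')"
    unfolding is_run_from_def
  proof (intro conjI allI)
    show "(?\<psi> \<circ> r') 0 = q" using assms(1,3) inj by (simp add: is_run_from_def)
  next
    fix i
    have "w i \<in> alph B" using assms(2) by (simp add: iwords_def)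
    moreover have "r' (Suc i) \<in> \<phi> ` trans B (?\<psi> (r' i)) (w i)"
      using assms(3) trans_rename[OF r'(2)] r'(1)[of i] by (metis is_run_from_def)
    ultimately show "(?\<psi> \<circ> r') (Suc i) \<in> trans B ((?\<psi> \<circ> r') i) (w i)"
      using trans_subset_states[OF wf r'(2)] inj by (auto simp: inv_into_f_f subset_iff)
  qed
  moreover have "r' = \<phi> \<circ> (?\<psi> \<circ> r')" using r'(1) by auto
  ultimately show ?thesis using that by blast
qed

lemma accepting_run_rename:
  "(\<And>i. r i \<in> states B) \<Longrightarrow> accepting_run B' w (\<phi> \<circ> r) \<longleftrightarrow> accepting_run B w r"
  by (simp add: accepting_run_def acc_rename_iff)

lemma lang_rename: "lang B' = lang B"
proof -
  have init: "init B \<in> states B" using wf by (simp add: wf_tncw_def)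
  have "w \<in> lang B' \<longleftrightarrow> w \<in> lang B" for w
  proof (cases "w \<in> iwords (alph B)")
    case True
    have "(\<exists>r'. is_run_from B' (\<phi> (init B)) w r' \<and> accepting_run B' w r')
        \<longleftrightarrow> (\<exists>r. is_run_from B (init B) w r \<and> accepting_run B w r)"
      using run_rename[OF init True] run_unrename[OF init True]
        accepting_run_rename run_in_states[OF wf init True] by metis
    then show ?thesis using True by (simp add: lang_def)
  qed (simp add: lang_def)
  then show ?thesis by blast
qed

lemma gfg_rename:
  assumes "is_gfg B"
  shows "is_gfg B'"
proof -
  obtain f where f: "f [] = init B"
    "\<And>u \<sigma>. u \<in> lists (alph B) \<Longrightarrow> \<sigma> \<in> alph B \<Longrightarrow> (f u, \<sigma>, f (u @ [\<sigma>])) \<in> Delta B"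
    "\<And>w. w \<in> lang B \<Longrightarrow> accepting_run B w (\<lambda>i. f (prefix w i))"
    using assms unfolding is_gfg_def by blast
  have f_states: "f u \<in> states B" if "u \<in> lists (alph B)" for u
    using strategy_in_states[OF wf _ f(2) that] f(1) wf by (simp add: wf_tncw_def)
  show ?thesis
    unfolding is_gfg_def
  proof (intro exI[of _ "\<phi> \<circ> f"] conjI ballI)
    show "(\<phi> \<circ> f) [] = init B'" using f(1) by simp
  next
    fix u \<sigma> assume "u \<in> lists (alph B')" "\<sigma> \<in> alph B'"
    then show "((\<phi> \<circ> f) u, \<sigma>, (\<phi> \<circ> f) (u @ [\<sigma>])) \<in> Delta B'"
      using f(2) f_states by (auto simp: Delta_def trans_rename)
  next
    fix w assume "w \<in> lang B'"
    then have w: "w \<in> lang B" "w \<in> iwords (alph B)" using lang_rename by (auto simp: lang_def)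
    then have "accepting_run B' w (\<phi> \<circ> (\<lambda>i. f (prefix w i)))"
      using f(3) accepting_run_rename[of "\<lambda>i. f (prefix w i)"] f_states[OF prefix_lists] by simp
    then show "accepting_run B' w (\<lambda>i. (\<phi> \<circ> f) (prefix w i))"
      by (simp add: comp_def)
  qed
qed

end

lemma minimal_gfg_card_le:
  fixes A :: "('q, 'a) tncw" and B :: "('p, 'a) tncw"
  assumes "minimal_gfg A" "wf_tncw B" "alph B = alph A" "is_gfg B" "lang B = lang A"
  shows "card (states A) \<le> card (states B)"
proof -
  obtain \<phi> :: "'p \<Rightarrow> nat" where "inj_on \<phi> (states B)"
    using finite_imp_inj_to_nat_seg assms(2) by (metis wf_tncw_def)
  then interpret renaming B \<phi> using assms(2) by unfold_locales
  have "wf_tncw B' \<and> alph B' = alph A \<and> is_gfg B' \<and> lang B' = lang A"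
    using assms(3-5) wf_rename gfg_rename lang_rename by simp
  then have "card (states A) \<le> card (states B')"
    using assms(1) unfolding minimal_gfg_def by blast
  also have "\<dots> = card (states B)" using inj by (simp add: card_image)
  finally show ?thesis .
qed

section \<open>Nice automata\<close>

locale nice_tncw =
  fixes A :: "('q, 'a) tncw"
  assumes wf: "wf_tncw A" and nice: "nice A"
begin

lemma init_in_states: "init A \<in> states A"
  using wf by (simp add: wf_tncw_def)

lemma trans_nonempty: "q \<in> states A \<Longrightarrow> \<sigma> \<in> alph A \<Longrightarrow> trans A q \<sigma> \<noteq> {}"
  using wf by (simp add: wf_tncw_def)

lemma Delta_target_in_states: "(q, \<sigma>, t) \<in> Delta A \<Longrightarrow> t \<in> states A"
  using trans_subset_states[OF wf] by (auto simp: Delta_def)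

lemma safe_path_in_states:
  assumes "q \<in> states A" "(q, s) \<in> (safe_edges A)\<^sup>*"
  shows "s \<in> states A"
  using assms(2,1) by induction (auto simp: safe_edges_def dest: Delta_target_in_states)

lemma same_safe_comp_if_safe_path:
  assumes "q \<in> states A" "(q, s) \<in> (safe_edges A)\<^sup>*"
  shows "same_safe_comp A q s"
proof -
  have "normal A" using nice by (simp add: nice_def)
  moreover have "s \<in> states A" using safe_path_in_states[OF assms] .
  ultimately have "(s, q) \<in> (safe_edges A)\<^sup>*" using assms unfolding normal_def by blast
  then show ?thesis using assms(2) by (simp add: same_safe_comp_def)
qed

lemma same_safe_comp_if_safe_transition:
  assumes "(p, \<sigma>, t) \<in> Delta A - acc A"
  shows "same_safe_comp A p t"
proof -
  have "(p, t) \<in> (safe_edges A)\<^sup>*" using assms by (auto simp: safe_edges_def)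
  moreover have "p \<in> states A" using assms by (simp add: Delta_def)
  ultimately show ?thesis by (rule same_safe_comp_if_safe_path[rotated])
qed

lemma safe_lang_nonempty:
  assumes "(x, \<sigma>, x') \<in> Delta A - acc A"
  shows "safe_lang_from A x' \<noteq> {}"
proof -
  have "(x', x) \<in> (safe_edges A)\<^sup>*"
    using same_safe_comp_if_safe_transition[OF assms] by (simp add: same_safe_comp_def)
  moreover have "(x, x') \<in> safe_edges A" using assms by (auto simp: safe_edges_def)
  ultimately have "(x', x') \<in> (safe_edges A)\<^sup>+" by (rule rtrancl_into_trancl1)
  then show ?thesis by (rule safe_lang_from_nonempty_if_safe_cycle)
qed

lemma safe_successor_unique:
  "(q, \<sigma>, a) \<in> Delta A - acc A \<Longrightarrow> (q, \<sigma>, b) \<in> Delta A - acc A \<Longrightarrow> a = b"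
  by (rule safe_det_unique[OF wf]) (use nice in \<open>simp_all add: nice_def\<close>)

lemma equiv_successors:
  "p \<in> states A \<Longrightarrow> p' \<in> states A \<Longrightarrow> \<sigma> \<in> alph A \<Longrightarrow> equiv_states A p p' \<Longrightarrow>
   t \<in> trans A p \<sigma> \<Longrightarrow> t' \<in> trans A p' \<sigma> \<Longrightarrow> equiv_states A t t'"
  by (rule equiv_states_successors) (use nice in \<open>simp_all add: nice_def\<close>)

lemma safe_le_step:
  assumes "safe_le A y z" "z \<in> states A" "(y, \<sigma>, y') \<in> Delta A - acc A"
  shows "\<exists>z'. (z, \<sigma>, z') \<in> Delta A - acc A \<and> safe_le A y' z'"
proof -
  have y: "y \<in> states A" "\<sigma> \<in> alph A" "y' \<in> trans A y \<sigma>" "(y, \<sigma>, y') \<notin> acc A"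
    using assms(3) by (auto simp: Delta_def)
  have through: "\<exists>z'. (z, \<sigma>, z') \<in> Delta A - acc A \<and> v \<in> safe_lang_from A z'"
    if v: "v \<in> safe_lang_from A y'" for v
  proof -
    have "case_nat \<sigma> v \<in> safe_lang_from A y"
      unfolding safe_lang_from_unfold[of "case_nat \<sigma> v"] using y v by auto
    then have "case_nat \<sigma> v \<in> safe_lang_from A z" using assms(1) by (auto simp: safe_le_def)
    then show ?thesis
      unfolding safe_lang_from_unfold[of "case_nat \<sigma> v"] using assms(2) by (auto simp: Delta_def)
  qed
  (* By safe determinism, all of L_safe(y') is read through one safe successor of z. *)
  obtain v0 where "v0 \<in> safe_lang_from A y'" using safe_lang_nonempty[OF assms(3)] by blast
  then obtain z' where z': "(z, \<sigma>, z') \<in> Delta A - acc A" using through by blast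
  have "safe_lang_from A y' \<subseteq> safe_lang_from A z'"
  proof
    fix v assume "v \<in> safe_lang_from A y'"
    then obtain z'' where "(z, \<sigma>, z'') \<in> Delta A - acc A" "v \<in> safe_lang_from A z''"
      using through by blast
    then show "v \<in> safe_lang_from A z'" using safe_successor_unique[OF z'] by metis
  qed
  moreover have "equiv_states A y' z'"
    using equiv_successors[OF y(1) assms(2) y(2) _ y(3)] assms(1) z'
    by (auto simp: safe_le_def Delta_def)
  ultimately show ?thesis using z' by (auto simp: safe_le_def)
qed

lemma safe_equiv_step:
  assumes "safe_equiv A y z" "z \<in> states A" "(y, \<sigma>, y') \<in> Delta A - acc A"
  shows "\<exists>z'. (z, \<sigma>, z') \<in> Delta A - acc A \<and> safe_equiv A y' z'"
proof -
  have le: "safe_le A y z" "safe_le A z y" using assms(1) by (simp_all add: safe_equiv_iff_safe_le)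
  obtain z' where z': "(z, \<sigma>, z') \<in> Delta A - acc A" "safe_le A y' z'"
    using safe_le_step[OF le(1) assms(2,3)] by blast
  have "y \<in> states A" using assms(3) by (simp add: Delta_def)
  then obtain y'' where "(y, \<sigma>, y'') \<in> Delta A - acc A" "safe_le A z' y''"
    using safe_le_step[OF le(2) _ z'(1)] by blast
  then have "safe_le A z' y'" using safe_successor_unique[OF assms(3)] by metis
  then show ?thesis using z' by (auto simp: safe_equiv_iff_safe_le)
qed

lemma safe_le_along_safe_path:
  assumes "safe_le A q s" "s \<in> states A" "(q, x) \<in> (safe_edges A)\<^sup>*"
  shows "\<exists>s'. (s, s') \<in> (safe_edges A)\<^sup>* \<and> s' \<in> states A \<and> safe_le A x s'"
  using assms(3)
proof (induction rule: rtrancl_induct)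
  case base
  then show ?case using assms(1,2) by blast
next
  case (step y z)
  then obtain sy where sy: "(s, sy) \<in> (safe_edges A)\<^sup>*" "sy \<in> states A" "safe_le A y sy" by blast
  obtain \<sigma> where "(y, \<sigma>, z) \<in> Delta A - acc A" using step.hyps(2) by (auto simp: safe_edges_def)
  then obtain sz where sz: "(sy, \<sigma>, sz) \<in> Delta A - acc A" "safe_le A z sz"
    using safe_le_step[OF sy(3,2)] by blast
  then have "(s, sz) \<in> (safe_edges A)\<^sup>*"
    using sy(1) by (auto simp: safe_edges_def intro: rtrancl_into_rtrancl)
  moreover have "sz \<in> states A" using sz(1) by (auto dest: Delta_target_in_states)
  ultimately show ?case using sz(2) by blast
qed


lemma safe_le_leaves_safe_comp:
  assumes "safe_le A q s" "s \<in> states A" "\<not> same_safe_comp A q s" "same_safe_comp A q x"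
  shows "\<exists>y\<in>states A. \<not> same_safe_comp A q y \<and> safe_le A x y"
proof -
  have "(q, x) \<in> (safe_edges A)\<^sup>*" using assms(4) by (simp add: same_safe_comp_def)
  then obtain s' where s': "(s, s') \<in> (safe_edges A)\<^sup>*" "s' \<in> states A" "safe_le A x s'"
    using safe_le_along_safe_path[OF assms(1,2)] by blast
  have "\<not> same_safe_comp A q s'"
  proof
    assume "same_safe_comp A q s'"
    moreover have "same_safe_comp A s' s"
      using same_safe_comp_if_safe_path[OF assms(2) s'(1)] by (rule same_safe_comp_sym)
    ultimately have "same_safe_comp A q s" by (rule same_safe_comp_trans)
    with assms(3) show False ..
  qed
  then show ?thesis using s' by blast
qed
end

section \<open>Redirecting transitions into a subset of the states\<close>

definition redirect :: "('q, 'a) tncw \<Rightarrow> 'q set \<Rightarrow> ('q \<Rightarrow> 'q) \<Rightarrow> ('q, 'a) tncw" where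
  "redirect A R h = \<lparr>alph = alph A, states = R, init = h (init A),
     trans = (\<lambda>p \<sigma>. {p' \<in> R. \<exists>t\<in>trans A p \<sigma>. equiv_states A t p'}),
     acc = {(p, \<sigma>, p'). p \<in> R \<and> \<sigma> \<in> alph A \<and> p' \<in> R \<and> (\<exists>t\<in>trans A p \<sigma>. equiv_states A t p')
              \<and> p' \<notin> h ` trans_nacc A p \<sigma>}\<rparr>"

locale redirection = nice_tncw +
  fixes R :: "'q set" and h :: "'q \<Rightarrow> 'q"
  assumes R_subset: "R \<subseteq> states A"
    and h_in_R: "\<And>x. x \<in> states A \<Longrightarrow> h x \<in> R"
    and safe_le_h: "\<And>x. x \<in> states A \<Longrightarrow> safe_le A x (h x)"
    and safe_equiv_h: "\<And>p \<sigma> t. p \<in> R \<Longrightarrow> (p, \<sigma>, t) \<in> Delta A - acc A \<Longrightarrow> safe_equiv A t (h t)"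
begin

abbreviation B :: "('q, 'a) tncw" where
  "B \<equiv> redirect A R h"

lemma redirect_simps [simp]:
  "alph B = alph A" "states B = R" "init B = h (init A)"
  "trans B p \<sigma> = {p' \<in> R. \<exists>t\<in>trans A p \<sigma>. equiv_states A t p'}"
  by (simp_all add: redirect_def)

lemma equiv_h: "x \<in> states A \<Longrightarrow> equiv_states A x (h x)"
  using safe_le_h by (simp add: safe_le_def)

lemma Delta_redirect_iff:
  "(p, \<sigma>, p') \<in> Delta B \<longleftrightarrow>
     p \<in> R \<and> \<sigma> \<in> alph A \<and> p' \<in> R \<and> (\<exists>t\<in>trans A p \<sigma>. equiv_states A t p')"
  by (auto simp: Delta_def)

lemma acc_redirect_iff:
  "(p, \<sigma>, p') \<in> acc B \<longleftrightarrow> (p, \<sigma>, p') \<in> Delta B \<and> p' \<notin> h ` trans_nacc A p \<sigma>"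
  unfolding Delta_redirect_iff by (simp add: redirect_def)

lemma safe_redirect_iff:
  "(p, \<sigma>, p') \<in> Delta B - acc B \<longleftrightarrow> p \<in> R \<and> (\<exists>t. (p, \<sigma>, t) \<in> Delta A - acc A \<and> p' = h t)"
proof
  assume "(p, \<sigma>, p') \<in> Delta B - acc B"
  then have "p \<in> R" "p' \<in> h ` trans_nacc A p \<sigma>"
    by (auto simp: acc_redirect_iff Delta_redirect_iff)
  then show "p \<in> R \<and> (\<exists>t. (p, \<sigma>, t) \<in> Delta A - acc A \<and> p' = h t)"
    by (auto simp: trans_nacc_def)
next
  assume "p \<in> R \<and> (\<exists>t. (p, \<sigma>, t) \<in> Delta A - acc A \<and> p' = h t)"
  then obtain t where p: "p \<in> R" and t: "(p, \<sigma>, t) \<in> Delta A - acc A" "p' = h t" by blast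
  have "t \<in> states A" using t(1) by (auto dest: Delta_target_in_states)
  then have "(p, \<sigma>, p') \<in> Delta B"
    using p t equiv_h h_in_R by (auto simp: Delta_redirect_iff Delta_def)
  moreover have "p' \<in> h ` trans_nacc A p \<sigma>" using t by (auto simp: trans_nacc_def)
  ultimately show "(p, \<sigma>, p') \<in> Delta B - acc B" by (simp add: acc_redirect_iff)
qed

lemma safe_redirect_unique:
  assumes "(p, \<sigma>, a) \<in> Delta B - acc B" "(p, \<sigma>, b) \<in> Delta B - acc B"
  shows "a = b"
proof -
  obtain s t where "(p, \<sigma>, s) \<in> Delta A - acc A" "a = h s" "(p, \<sigma>, t) \<in> Delta A - acc A" "b = h t"
    using assms unfolding safe_redirect_iff by blast
  then show ?thesis using safe_successor_unique by blast
qed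

lemma wf_redirect: "wf_tncw B"
proof -
  have "trans B q \<sigma> \<noteq> {}" if q: "q \<in> R" "\<sigma> \<in> alph A" for q \<sigma>
  proof -
    obtain t where "t \<in> trans A q \<sigma>" using trans_nonempty q R_subset by blast
    moreover have "t \<in> states A" using calculation trans_subset_states[OF wf] q R_subset by blast
    ultimately show ?thesis using h_in_R equiv_h by auto
  qed
  moreover have "finite R" using R_subset wf by (auto simp: wf_tncw_def intro: finite_subset)
  moreover have "acc B \<subseteq> Delta B" by (auto simp: acc_redirect_iff)
  ultimately show ?thesis
    using wf h_in_R init_in_states by (auto simp: wf_tncw_def)
qed

lemma safe_lang_from_subset_redirect:
  assumes "x \<in> states A"
  shows "safe_lang_from A x \<subseteq> safe_lang_from B (h x)"
proof
  fix w assume w: "w \<in> safe_lang_from A x"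
  show "w \<in> safe_lang_from B (h x)"
  proof (rule safe_lang_from_coinduct[where P = "\<lambda>b i. b \<in> R \<and> suffix w i \<in> safe_lang_from A b"])
    show "h x \<in> R \<and> suffix w 0 \<in> safe_lang_from A (h x)"
      using assms w h_in_R safe_le_h by (auto simp: safe_le_def)
  next
    fix b i assume b: "b \<in> R \<and> suffix w i \<in> safe_lang_from A b"
    then obtain t where t: "(b, w i, t) \<in> Delta A - acc A" "suffix w (Suc i) \<in> safe_lang_from A t"
      using R_subset unfolding safe_lang_from_suffix_iff[of w i] by (auto simp: Delta_def)
    have "(b, w i, h t) \<in> Delta B - acc B" using b t(1) safe_redirect_iff by blast
    moreover have "t \<in> states A" using t(1) by (auto dest: Delta_target_in_states)
    then have "h t \<in> R" "suffix w (Suc i) \<in> safe_lang_from A (h t)"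
      using t(2) h_in_R safe_le_h by (auto simp: safe_le_def)
    ultimately show "\<exists>b'. (b, w i, b') \<in> Delta B - acc B \<and> b' \<in> R \<and>
        suffix w (Suc i) \<in> safe_lang_from A b'"
      by blast
  qed
qed

lemma safe_lang_from_redirect_subset:
  assumes "p \<in> R"
  shows "safe_lang_from B p \<subseteq> safe_lang_from A p"
proof
  fix w assume w: "w \<in> safe_lang_from B p"
  show "w \<in> safe_lang_from A p"
  proof (rule safe_lang_from_coinduct[where P = "\<lambda>a i. a \<in> states A \<and>
            (\<exists>b\<in>R. safe_equiv A b a \<and> suffix w i \<in> safe_lang_from B b)"])
    show "p \<in> states A \<and> (\<exists>b\<in>R. safe_equiv A b p \<and> suffix w 0 \<in> safe_lang_from B b)"
      using assms w R_subset by (auto simp: safe_equiv_def equiv_states_def)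
  next
    fix a i assume "a \<in> states A \<and> (\<exists>b\<in>R. safe_equiv A b a \<and> suffix w i \<in> safe_lang_from B b)"
    then obtain b where a: "a \<in> states A" and b: "b \<in> R" "safe_equiv A b a"
      "suffix w i \<in> safe_lang_from B b" by blast
    then obtain b' where b': "(b, w i, b') \<in> Delta B - acc B" "suffix w (Suc i) \<in> safe_lang_from B b'"
      unfolding safe_lang_from_suffix_iff[of w i] by (auto simp: Delta_def)
    then obtain t where t: "(b, w i, t) \<in> Delta A - acc A" "b' = h t"
      unfolding safe_redirect_iff by blast
    obtain a' where a': "(a, w i, a') \<in> Delta A - acc A" "safe_equiv A t a'"
      using safe_equiv_step[OF _ a t(1)] b(2) by blast
    have "safe_equiv A b' a'"
      using safe_equiv_h[OF b(1) t(1)] a'(2) t(2) by (auto simp: safe_equiv_def equiv_states_def)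
    moreover have "b' \<in> R" using b'(1) by (auto simp: Delta_def)
    moreover have "a' \<in> states A" using a'(1) by (auto dest: Delta_target_in_states)
    ultimately show "\<exists>a'. (a, w i, a') \<in> Delta A - acc A \<and> a' \<in> states A \<and>
        (\<exists>b\<in>R. safe_equiv A b a' \<and> suffix w (Suc i) \<in> safe_lang_from B b)"
      using a'(1) b'(2) by blast
  qed
qed

lemma lang_from_h_init: "lang_from A (h (init A)) = lang A"
  using equiv_h[OF init_in_states] by (simp add: equiv_states_def lang_eq_lang_from_init)

lemma lang_redirect_subset: "lang B \<subseteq> lang A"
proof
  fix w assume "w \<in> lang B"
  then obtain \<rho> where w: "w \<in> iwords (alph A)" and \<rho>: "is_run_from B (h (init A)) w \<rho>"
    and "accepting_run B w \<rho>"
    by (auto simp: lang_def)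
  then obtain n where n: "\<forall>i\<ge>n. (\<rho> i, w i, \<rho> (Suc i)) \<notin> acc B"
    by (auto simp: accepting_run_iff_eventually_safe)
  have \<rho>_R: "\<rho> i \<in> R" for i
    using run_in_states[OF wf_redirect _ _ \<rho>] h_in_R init_in_states w by simp
  have "suffix w i \<in> lang_from A (\<rho> i)" if "i \<le> n" for i
    using that
  proof (induction rule: inc_induct)
    case base
    have "suffix w n \<in> safe_lang_from B (\<rho> n)" using safe_lang_from_suffix[OF \<rho> n] w by simp
    then have "suffix w n \<in> safe_lang_from A (\<rho> n)"
      by (rule subsetD[OF safe_lang_from_redirect_subset[OF \<rho>_R]])
    then show ?case by (rule subsetD[OF safe_lang_from_subset_lang_from])
  next
    case (step i)
    have "\<rho> (Suc i) \<in> trans B (\<rho> i) (w i)" using \<rho> by (simp add: is_run_from_def)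
    then obtain t where t: "t \<in> trans A (\<rho> i) (w i)" "equiv_states A t (\<rho> (Suc i))" by auto
    then have "suffix w (Suc i) \<in> lang_from A t" using step.IH by (simp add: equiv_states_def suffix_def)
    moreover have "w i \<in> alph A" using w by (simp add: iwords_def)
    ultimately show ?case using t(1) unfolding lang_from_suffix_iff[of w i] by blast
  qed
  from this[of 0] show "w \<in> lang A"
    using \<rho> lang_from_h_init by (simp add: is_run_from_def)
qed

end

lemma gfg_state_iff:
  "gfg_state A q \<longleftrightarrow> (\<exists>f. f [] = q
     \<and> (\<forall>u\<in>lists (alph A). \<forall>\<sigma>\<in>alph A. (f u, \<sigma>, f (u @ [\<sigma>])) \<in> Delta A)
     \<and> (\<forall>w\<in>lang_from A q. accepting_run A w (\<lambda>i. f (prefix w i))))"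
  by (simp add: gfg_state_def is_gfg_def lang_from_def Delta_def accepting_run_def)

locale redirection_strategy = redirection A R h
  for A :: "('q, 'a) tncw" and R h +
  fixes f :: "'a list \<Rightarrow> 'q"
  assumes f_Nil: "f [] = h (init A)"
    and f_Delta: "\<And>u \<sigma>. u \<in> lists (alph A) \<Longrightarrow> \<sigma> \<in> alph A \<Longrightarrow> (f u, \<sigma>, f (u @ [\<sigma>])) \<in> Delta A"
    and f_accepting: "\<And>w. w \<in> lang A \<Longrightarrow> accepting_run A w (\<lambda>i. f (prefix w i))"
begin

primrec strat_rev :: "'a list \<Rightarrow> 'q" where
  "strat_rev [] = h (init A)"
| "strat_rev (\<sigma> # ru) =
     (if \<exists>p'. (strat_rev ru, \<sigma>, p') \<in> Delta B - acc B
      then SOME p'. (strat_rev ru, \<sigma>, p') \<in> Delta B - acc B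
      else h (f (rev ru @ [\<sigma>])))"

definition strat :: "'a list \<Rightarrow> 'q" where
  "strat u = strat_rev (rev u)"

lemma strat_Nil: "strat [] = h (init A)"
  by (simp add: strat_def)

lemma strat_snoc:
  "strat (u @ [\<sigma>]) =
     (if \<exists>p'. (strat u, \<sigma>, p') \<in> Delta B - acc B
      then SOME p'. (strat u, \<sigma>, p') \<in> Delta B - acc B
      else h (f (u @ [\<sigma>])))"
  by (auto simp: strat_def)

lemma strat_snoc_safe:
  assumes "\<exists>p'. (strat u, \<sigma>, p') \<in> Delta B - acc B"
  shows "(strat u, \<sigma>, strat (u @ [\<sigma>])) \<in> Delta B - acc B"
  unfolding strat_snoc if_P[OF assms] by (rule someI_ex[OF assms])

lemma strat_snoc_jump:
  assumes "\<nexists>p'. (strat u, \<sigma>, p') \<in> Delta B - acc B"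
  shows "strat (u @ [\<sigma>]) = h (f (u @ [\<sigma>]))"
  unfolding strat_snoc if_not_P[OF assms] ..

lemma f_in_states: "u \<in> lists (alph A) \<Longrightarrow> f u \<in> states A"
proof (rule strategy_in_states[OF wf _ f_Delta])
  show "f [] \<in> states A" using f_Nil h_in_R[OF init_in_states] R_subset by auto
qed

lemma strat_in_R_equiv_f:
  "u \<in> lists (alph A) \<Longrightarrow> strat u \<in> R \<and> equiv_states A (strat u) (f u)"
proof (induction u rule: rev_induct)
  case Nil
  then show ?case using h_in_R equiv_h init_in_states by (simp add: strat_Nil f_Nil equiv_states_def)
next
  case (snoc \<sigma> u)
  then have u: "u \<in> lists (alph A)" "\<sigma> \<in> alph A" and IH: "strat u \<in> R" "equiv_states A (strat u) (f u)"
    by auto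
  have f_step: "f (u @ [\<sigma>]) \<in> trans A (f u) \<sigma>" "f (u @ [\<sigma>]) \<in> states A"
    using f_Delta[OF u] f_in_states snoc.prems by (auto simp: Delta_def)
  show ?case
  proof (cases "\<exists>p'. (strat u, \<sigma>, p') \<in> Delta B - acc B")
    case True
    then have "(strat u, \<sigma>, strat (u @ [\<sigma>])) \<in> Delta B"
      using strat_snoc_safe by blast
    then obtain t where "strat (u @ [\<sigma>]) \<in> R" "t \<in> trans A (strat u) \<sigma>"
      "equiv_states A t (strat (u @ [\<sigma>]))"
      by (auto simp: Delta_redirect_iff)
    moreover have "equiv_states A t (f (u @ [\<sigma>]))"
      using equiv_successors[OF _ f_in_states[OF u(1)] u(2) IH(2) calculation(2) f_step(1)]
        IH(1) R_subset by blast
    ultimately show ?thesis by (simp add: equiv_states_def)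
  next
    case False
    then show ?thesis
      using h_in_R equiv_h f_step(2) by (simp add: strat_snoc_jump equiv_states_def)
  qed
qed

lemma strat_Delta:
  assumes "u \<in> lists (alph A)" "\<sigma> \<in> alph A"
  shows "(strat u, \<sigma>, strat (u @ [\<sigma>])) \<in> Delta B"
proof -
  have u\<sigma>: "u @ [\<sigma>] \<in> lists (alph A)" using assms by simp
  have "strat u \<in> states A" using strat_in_R_equiv_f[OF assms(1)] R_subset by blast
  then obtain t where t: "t \<in> trans A (strat u) \<sigma>" using trans_nonempty assms(2) by blast
  have "f (u @ [\<sigma>]) \<in> trans A (f u) \<sigma>" using f_Delta[OF assms] by (simp add: Delta_def)
  then have "equiv_states A t (f (u @ [\<sigma>]))"
    using equiv_successors[OF \<open>strat u \<in> states A\<close> f_in_states[OF assms(1)] assms(2) _ t]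
      strat_in_R_equiv_f[OF assms(1)] by blast
  then show ?thesis
    using t assms(2) strat_in_R_equiv_f[OF assms(1)] strat_in_R_equiv_f[OF u\<sigma>]
    by (auto simp: Delta_redirect_iff equiv_states_def)
qed

lemma strat_safe_step:
  assumes "(strat u, \<sigma>, p') \<in> Delta B - acc B"
  shows "strat (u @ [\<sigma>]) = p'"
proof -
  have "(strat u, \<sigma>, strat (u @ [\<sigma>])) \<in> Delta B - acc B"
    using assms by (intro strat_snoc_safe) blast
  then show ?thesis using safe_redirect_unique assms by blast
qed

lemma strat_keeps_safe:
  assumes w: "w \<in> iwords (alph A)"
    and safe: "suffix w i \<in> safe_lang_from B (strat (prefix w i))"
  shows "(strat (prefix w i), w i, strat (prefix w (Suc i))) \<in> Delta B - acc B
    \<and> suffix w (Suc i) \<in> safe_lang_from B (strat (prefix w (Suc i)))"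
proof -
  have "strat (prefix w i) \<in> R" using strat_in_R_equiv_f[OF prefix_lists[OF w]] by blast
  then obtain p' where p': "(strat (prefix w i), w i, p') \<in> Delta B - acc B"
    "suffix w (Suc i) \<in> safe_lang_from B p'"
    using safe unfolding safe_lang_from_suffix_iff[of w i] by (auto simp: Delta_def)
  then show ?thesis using strat_safe_step[OF p'(1)] by (simp add: prefix_Suc)
qed

lemma strat_safe_from:
  assumes w: "w \<in> iwords (alph A)"
    and safe: "suffix w j \<in> safe_lang_from B (strat (prefix w j))"
    and "j \<le> i"
  shows "(strat (prefix w i), w i, strat (prefix w (Suc i))) \<notin> acc B"
proof -
  have inv: "suffix w (j + d) \<in> safe_lang_from B (strat (prefix w (j + d)))" for d
  proof (induction d)
    case 0
    then show ?case using safe by simp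
  next
    case (Suc d)
    then show ?case using strat_keeps_safe[OF w, of "j + d"] by simp
  qed
  obtain d where "i = j + d" using assms(3) le_Suc_ex by blast
  then show ?thesis using strat_keeps_safe[OF w inv[of d]] by simp
qed

lemma strat_accepting:
  assumes "w \<in> lang A"
  shows "accepting_run B w (\<lambda>i. strat (prefix w i))"
proof -
  have w: "w \<in> iwords (alph A)" using assms by (simp add: lang_def)
  obtain k where k: "\<forall>i\<ge>k. (f (prefix w i), w i, f (prefix w (Suc i))) \<notin> acc A"
    using f_accepting[OF assms] by (auto simp: accepting_run_iff_eventually_safe)
  have "\<exists>n. \<forall>i\<ge>n. (strat (prefix w i), w i, strat (prefix w (Suc i))) \<notin> acc B"
  proof (cases "\<exists>j\<ge>k. \<nexists>p'. (strat (prefix w j), w j, p') \<in> Delta B - acc B")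
    case True
    then obtain j where j: "k \<le> j" "\<nexists>p'. (strat (prefix w j), w j, p') \<in> Delta B - acc B"
      by blast
    have jump: "strat (prefix w (Suc j)) = h (f (prefix w (Suc j)))"
      unfolding prefix_Suc using j(2) by (rule strat_snoc_jump)
    have run: "is_run_from A (f []) w (\<lambda>i. f (prefix w i))" by (rule strategy_run[OF f_Delta w])
    have "\<forall>i\<ge>Suc j. (f (prefix w i), w i, f (prefix w (Suc i))) \<notin> acc A" using k j(1) by simp
    then have "suffix w (Suc j) \<in> safe_lang_from A (f (prefix w (Suc j)))"
      using safe_lang_from_suffix[OF run _ w] by simp
    then have "suffix w (Suc j) \<in> safe_lang_from B (strat (prefix w (Suc j)))"
      unfolding jump
      by (rule subsetD[OF safe_lang_from_subset_redirect[OF f_in_states[OF prefix_lists[OF w]]]])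
    then show ?thesis using strat_safe_from[OF w] by blast
  next
    case False
    have "(strat (prefix w i), w i, strat (prefix w (Suc i))) \<notin> acc B" if i: "k \<le> i" for i
    proof -
      obtain p' where p': "(strat (prefix w i), w i, p') \<in> Delta B - acc B" using False i by blast
      then have "strat (prefix w (Suc i)) = p'" unfolding prefix_Suc by (rule strat_safe_step)
      then show ?thesis using p' by simp
    qed
    then show ?thesis by blast
  qed
  then show ?thesis by (simp add: accepting_run_iff_eventually_safe)
qed

lemma lang_subset_redirect: "lang A \<subseteq> lang B"
proof
  fix w assume w: "w \<in> lang A"
  have "is_run_from B (strat []) w (\<lambda>i. strat (prefix w i))"
    using strategy_run[of B strat] strat_Delta w by (auto simp: lang_def)
  then show "w \<in> lang B" using w strat_accepting by (auto simp: lang_def strat_Nil)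
qed

lemma gfg_redirect: "is_gfg B"
  unfolding is_gfg_def using strat_Nil strat_Delta strat_accepting lang_redirect_subset
  by (intro exI[of _ strat]) auto

end

context redirection
begin

lemma ex_redirection_strategy: "\<exists>f. redirection_strategy A R h f"
proof -
  have "h (init A) \<in> states A" using h_in_R R_subset init_in_states by blast
  then have "gfg_state A (h (init A))" using nice by (simp add: nice_def)
  then obtain f where f: "f [] = h (init A)"
    "\<forall>u\<in>lists (alph A). \<forall>\<sigma>\<in>alph A. (f u, \<sigma>, f (u @ [\<sigma>])) \<in> Delta A"
    "\<forall>w\<in>lang A. accepting_run A w (\<lambda>i. f (prefix w i))"
    unfolding gfg_state_iff lang_from_h_init by blast
  then have "redirection_strategy A R h f" by unfold_locales auto
  then show ?thesis by blast
qed

lemma lang_redirect: "lang B = lang A"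
  using ex_redirection_strategy redirection_strategy.lang_subset_redirect lang_redirect_subset
  by blast

lemma states_eq_if_minimal_gfg:
  assumes "minimal_gfg A"
  shows "R = states A"
proof -
  obtain f where "redirection_strategy A R h f" using ex_redirection_strategy by blast
  then have "card (states A) \<le> card R"
    using minimal_gfg_card_le[OF assms wf_redirect _ redirection_strategy.gfg_redirect lang_redirect]
    by simp
  moreover have "finite (states A)" using wf by (simp add: wf_tncw_def)
  ultimately show ?thesis using R_subset by (simp add: card_seteq)
qed

end

section \<open>Minimal GFG-tNCWs\<close>

context nice_tncw
begin

lemma safe_minimal_if_minimal_gfg:
  assumes "minimal_gfg A"
  shows "safe_minimal A"
  unfolding safe_minimal_def
proof (intro ballI impI)
  fix q s assume q: "q \<in> states A" and s: "s \<in> states A" and qs: "safe_equiv A q s"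
  show "q = s"
  proof (rule ccontr)
    assume "q \<noteq> s"
    interpret redirection A "states A - {q}" "\<lambda>x. if x = q then s else x"
      using s \<open>q \<noteq> s\<close> qs by unfold_locales
        (auto simp: safe_equiv_iff_safe_le safe_le_refl safe_equiv_def equiv_states_def)
    show False using states_eq_if_minimal_gfg[OF assms] q by blast
  qed
qed

lemma safe_centralized_if_minimal_gfg:
  assumes "minimal_gfg A"
  shows "safe_centralized A"
  unfolding safe_centralized_def
proof (intro ballI impI)
  fix q s assume q: "q \<in> states A" and s: "s \<in> states A" and qs: "safe_le A q s"
  show "same_safe_comp A q s"
  proof (rule ccontr)
    assume apart: "\<not> same_safe_comp A q s"
    define T where "T = {x \<in> states A. same_safe_comp A q x}"
    define h where "h x = (if x \<in> T then SOME y. y \<in> states A - T \<and> safe_le A x y else x)" for x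
    have h: "h x \<in> states A - T \<and> safe_le A x (h x)" if "x \<in> states A" for x
    proof (cases "x \<in> T")
      case True
      then have "\<exists>y. y \<in> states A - T \<and> safe_le A x y"
        using safe_le_leaves_safe_comp[OF qs s apart] by (auto simp: T_def)
      from someI_ex[OF this] show ?thesis using True by (simp add: h_def)
    qed (use that in \<open>simp add: h_def safe_le_refl\<close>)
    have closed: "t \<in> states A - T" if "p \<in> states A - T" "(p, \<sigma>, t) \<in> Delta A - acc A" for p \<sigma> t
    proof -
      have "t \<notin> T"
      proof
        assume "t \<in> T"
        then have "same_safe_comp A q t" by (simp add: T_def)
        then have "same_safe_comp A q p"
          using same_safe_comp_sym[OF same_safe_comp_if_safe_transition[OF that(2)]]
          by (rule same_safe_comp_trans)
        then show False using that(1) by (simp add: T_def)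
      qed
      moreover have "t \<in> states A" using that(2) by (rule Delta_target_in_states[OF DiffD1])
      ultimately show ?thesis by blast
    qed
    interpret redirection A "states A - T" h
    proof unfold_locales
      fix p \<sigma> t assume "p \<in> states A - T" "(p, \<sigma>, t) \<in> Delta A - acc A"
      then have "t \<in> states A - T" by (rule closed)
      then show "safe_equiv A t (h t)" by (simp add: h_def safe_equiv_def equiv_states_def)
    qed (use h in blast)+
    have "q \<in> T" using q by (simp add: T_def same_safe_comp_def)
    then show False using states_eq_if_minimal_gfg[OF assms] q by blast
  qed
qed
end

theorem mainTheorem1:
  fixes A :: "('q, 'a) tncw"
  assumes "wf_tncw A" and "is_gfg A" and "nice A" and "minimal_gfg A"
  shows "safe_centralized A \<and> safe_minimal A"
proof -
  interpret nice_tncw A using assms(1,3) by unfold_locales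
  show ?thesis
    using safe_centralized_if_minimal_gfg[OF assms(4)] safe_minimal_if_minimal_gfg[OF assms(4)] by blast
qed

end
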